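(* Let $\Gamma$ be a metric graph and $D$ a vertex-supported effective divisor on $\Gamma$. Then the cell complex $|D|$ has finitely many cells.
   Context: A metric graph $\Gamma=(V,E)$ is a connected undirected graph whose edges have positive real lengths $M_e$. A divisor is a finite formal $\mathbb{Z}$-combination of points of $\Gamma$; effective means all coefficients are $\ge 0$; vertex-supported means its support lies in $V$. A rational function is a continuous function $\Gamma\to\mathbb{R}$ that is piecewise linear on each edge with finitely many pieces and integer slopes; $(f)=\sum_x \mathrm{ord}_x(f)x$, where $\mathrm{ord}_x(f)$ is the sum of outgoing slopes at $x$. $R(D)=\{f: D+(f)\text{ effective}\}$ and $|D|=\{D+(f):f\in R(D)\}$. Cells of $|D|$: identifying each open edge $e$ with $(0,M_e)$, a cell is given by data consisting of nonnegative integers $d_v$ ($v\in V$), ordered partitions $d_e=\sum_{i=1}^{r_e}d_e^i$ into positive integers on some edges $e$, and integers $m_e$ ($e\in E$); $L\in|D|$ lies in the cell iff $L(v)=d_v$ for all $v$, on each edge with a partition $L|_{e^\circ}=\sum_i d_e^i x_i$ with $0<x_1<\dots<x_{r_e}<M_e$, $L$ vanishes on the interiors of the other edges, and every $f\in R(D)$ with $L=D+(f)$ has outgoing slope $m_e$ at the point $0$ of $e$ for every $e$. These cells make $|D|$ a cell complex. *)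

theory Defs
  imports "HOL-Analysis.Analysis"
begin

text \<open>Each edge e is identified with the interval [0, len e], the point 0 being src e
  and the point len e being tgt e.\<close>

record ('v, 'e) mgraph =
  verts :: "'v set"
  edges :: "'e set"
  src :: "'e \<Rightarrow> 'v"
  tgt :: "'e \<Rightarrow> 'v"
  len :: "'e \<Rightarrow> real"

text \<open>Points of the metric graph: vertices, and interior points of edges
  (Ed e t with 0 < t < len e).\<close>

datatype ('v, 'e) point = Vx 'v | Ed 'e real

definition points :: "('v, 'e, 'z) mgraph_scheme \<Rightarrow> ('v, 'e) point set" where
  "points G = Vx ` verts G \<union> {Ed e t | e t. e \<in> edges G \<and> 0 < t \<and> t < len G e}"

definition metric_graph :: "('v, 'e, 'z) mgraph_scheme \<Rightarrow> bool" where
  "metric_graph G \<longleftrightarrow> finite (verts G) \<and> finite (edges G) \<and> verts G \<noteq> {} \<and>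
     (\<forall>e\<in>edges G. src G e \<in> verts G \<and> tgt G e \<in> verts G \<and> len G e > 0) \<and>
     (\<forall>u\<in>verts G. \<forall>w\<in>verts G.
        (u, w) \<in> ({(src G e, tgt G e) | e. e \<in> edges G} \<union>
                   {(tgt G e, src G e) | e. e \<in> edges G})\<^sup>*)"

definition edge_fun :: "('v, 'e, 'z) mgraph_scheme \<Rightarrow> (('v, 'e) point \<Rightarrow> real) \<Rightarrow> 'e \<Rightarrow> real \<Rightarrow> real" where
  "edge_fun G f e t = (if t \<le> 0 then f (Vx (src G e))
     else if t \<ge> len G e then f (Vx (tgt G e)) else f (Ed e t))"

text \<open>Piecewise linear with finitely many pieces and integer slopes on [a, b]
  (this includes continuity on [a, b]).\<close>

definition pl_int :: "(real \<Rightarrow> real) \<Rightarrow> real \<Rightarrow> real \<Rightarrow> bool" where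
  "pl_int g a b \<longleftrightarrow> (\<exists>(n::nat) (p::nat \<Rightarrow> real) (s::nat \<Rightarrow> int).
      p 0 = a \<and> p n = b \<and> (\<forall>i<n. p i < p (Suc i)) \<and>
      (\<forall>i<n. \<forall>t\<in>{p i..p (Suc i)}. g t = g (p i) + of_int (s i) * (t - p i)))"

text \<open>Rational functions on the metric graph (continuity is built into pl_int on each
  closed edge).\<close>

definition rational_fun :: "('v, 'e, 'z) mgraph_scheme \<Rightarrow> (('v, 'e) point \<Rightarrow> real) \<Rightarrow> bool" where
  "rational_fun G f \<longleftrightarrow> (\<forall>e\<in>edges G. pl_int (edge_fun G f e) 0 (len G e))"

definition rslope :: "(real \<Rightarrow> real) \<Rightarrow> real \<Rightarrow> real" where
  "rslope g t = Lim (at_right 0) (\<lambda>h. (g (t + h) - g t) / h)"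

definition lslope :: "(real \<Rightarrow> real) \<Rightarrow> real \<Rightarrow> real" where
  "lslope g t = Lim (at_left 0) (\<lambda>h. (g (t + h) - g t) / h)"

text \<open>ord_x(f): sum of outgoing slopes at x.\<close>

definition ord :: "('v, 'e, 'z) mgraph_scheme \<Rightarrow> (('v, 'e) point \<Rightarrow> real) \<Rightarrow> ('v, 'e) point \<Rightarrow> real" where
  "ord G f x = (case x of
      Vx v \<Rightarrow> (\<Sum>e\<in>{e\<in>edges G. src G e = v}. rslope (edge_fun G f e) 0)
             + (\<Sum>e\<in>{e\<in>edges G. tgt G e = v}. - lslope (edge_fun G f e) (len G e))
    | Ed e t \<Rightarrow> rslope (edge_fun G f e) t - lslope (edge_fun G f e) t)"

text \<open>The principal divisor (f), as a (real-valued, in fact integer-valued) function.\<close>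

definition prin :: "('v, 'e, 'z) mgraph_scheme \<Rightarrow> (('v, 'e) point \<Rightarrow> real) \<Rightarrow> ('v, 'e) point \<Rightarrow> real" where
  "prin G f x = (if x \<in> points G then ord G f x else 0)"

definition vertex_supported_effective :: "('v, 'e, 'z) mgraph_scheme \<Rightarrow> (('v, 'e) point \<Rightarrow> int) \<Rightarrow> bool" where
  "vertex_supported_effective G D \<longleftrightarrow> (\<forall>x. D x \<ge> 0) \<and> (\<forall>x. D x \<noteq> 0 \<longrightarrow> x \<in> Vx ` verts G)"

definition RD :: "('v, 'e, 'z) mgraph_scheme \<Rightarrow> (('v, 'e) point \<Rightarrow> int) \<Rightarrow> (('v, 'e) point \<Rightarrow> real) set" where
  "RD G D = {f. rational_fun G f \<and> (\<forall>x. real_of_int (D x) + prin G f x \<ge> 0)}"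

definition linsys :: "('v, 'e, 'z) mgraph_scheme \<Rightarrow> (('v, 'e) point \<Rightarrow> int) \<Rightarrow> (('v, 'e) point \<Rightarrow> int) set" where
  "linsys G D = {L. \<exists>f\<in>RD G D. \<forall>x. real_of_int (L x) = real_of_int (D x) + prin G f x}"

text \<open>Membership of L in the cell with data (dv, P, m): dv v = d_v, P e the ordered
  partition of d_e on edge e (the empty list meaning that e carries no partition),
  m e = m_e.\<close>

definition in_cell :: "('v, 'e, 'z) mgraph_scheme \<Rightarrow> (('v, 'e) point \<Rightarrow> int) \<Rightarrow>
    ('v \<Rightarrow> nat) \<Rightarrow> ('e \<Rightarrow> nat list) \<Rightarrow> ('e \<Rightarrow> int) \<Rightarrow> (('v, 'e) point \<Rightarrow> int) \<Rightarrow> bool" where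
  "in_cell G D dv P m L \<longleftrightarrow> L \<in> linsys G D \<and>
     (\<forall>v\<in>verts G. L (Vx v) = int (dv v)) \<and>
     (\<forall>e\<in>edges G. (\<forall>i<length (P e). P e ! i > 0) \<and>
        (\<exists>xs::real list. length xs = length (P e) \<and> sorted_wrt (<) xs \<and>
           (\<forall>x\<in>set xs. 0 < x \<and> x < len G e) \<and>
           (\<forall>t. 0 < t \<and> t < len G e \<longrightarrow>
              L (Ed e t) = (\<Sum>i<length xs. if xs ! i = t then int (P e ! i) else 0)))) \<and>
     (\<forall>f\<in>RD G D. (\<forall>x. real_of_int (L x) = real_of_int (D x) + prin G f x) \<longrightarrow>
        (\<forall>e\<in>edges G. rslope (edge_fun G f e) 0 = of_int (m e)))"

definition cell :: "('v, 'e, 'z) mgraph_scheme \<Rightarrow> (('v, 'e) point \<Rightarrow> int) \<Rightarrow>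
    ('v \<Rightarrow> nat) \<Rightarrow> ('e \<Rightarrow> nat list) \<Rightarrow> ('e \<Rightarrow> int) \<Rightarrow> (('v, 'e) point \<Rightarrow> int) set" where
  "cell G D dv P m = {L. in_cell G D dv P m L}"

definition cells :: "('v, 'e, 'z) mgraph_scheme \<Rightarrow> (('v, 'e) point \<Rightarrow> int) \<Rightarrow>
    (('v, 'e) point \<Rightarrow> int) set set" where
  "cells G D = {cell G D dv P m | dv P m. cell G D dv P m \<noteq> {}}"

end

theory Submission
  imports Defs
begin

text \<open>Let \<open>f \<in> R(D)\<close>. Since \<open>D\<close> vanishes inside the edges, \<open>(f) \<ge> 0\<close> there, so \<open>f\<close> is convex
  along every edge. Summing \<open>D + (f) \<ge> 0\<close> over an upper level set of \<open>f\<close> on the vertices then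
  bounds every outgoing slope at a vertex by \<open>deg D\<close>. Consequently the jumps of \<open>f\<close> inside an
  edge add up to at most \<open>2 deg D\<close>, and \<open>D + (f)\<close> is bounded at the vertices, so only finitely
  many cell data \<open>(d_v, d_e^i, m_e)\<close> occur; data outside \<open>V\<close> and \<open>E\<close> do not affect a cell.\<close>


lemma rslope_eq_if_linear_on:
  assumes "a \<le> t" "t < b" and "\<And>x. x \<in> {a..b} \<Longrightarrow> g x = g a + c * (x - a)"
  shows "rslope g t = c"
  unfolding rslope_def
proof (rule tendsto_Lim[OF trivial_limit_at_right_real], rule tendsto_eventually)
  show "\<forall>\<^sub>F h in at_right 0. (g (t + h) - g t) / h = c"
    unfolding eventually_at_right_field
  proof (intro exI[of _ "b - t"] conjI allI impI)
    fix h :: real assume h: "0 < h" "h < b - t"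
    have "g (t + h) = g a + c * (t + h - a)" "g t = g a + c * (t - a)"
      using assms(3)[of "t + h"] assms(3)[of t] assms(1,2) h by auto
    then have "g (t + h) - g t = c * h" by (simp add: algebra_simps)
    then show "(g (t + h) - g t) / h = c" using h by simp
  qed (use assms in auto)
qed

lemma lslope_eq_if_linear_on:
  assumes "a < t" "t \<le> b" and "\<And>x. x \<in> {a..b} \<Longrightarrow> g x = g a + c * (x - a)"
  shows "lslope g t = c"
  unfolding lslope_def
proof (rule tendsto_Lim[OF trivial_limit_at_left_real], rule tendsto_eventually)
  show "\<forall>\<^sub>F h in at_left 0. (g (t + h) - g t) / h = c"
    unfolding eventually_at_left_field
  proof (intro exI[of _ "a - t"] conjI allI impI)
    fix h :: real assume h: "a - t < h" "h < 0"
    have "g (t + h) = g a + c * (t + h - a)" "g t = g a + c * (t - a)"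
      using assms(3)[of "t + h"] assms(3)[of t] assms(1,2) h by auto
    then have "g (t + h) - g t = c * h" by (simp add: algebra_simps)
    then show "(g (t + h) - g t) / h = c" using h by simp
  qed (use assms in auto)
qed

locale pl_partition =
  fixes g :: "real \<Rightarrow> real" and n :: nat and p :: "nat \<Rightarrow> real" and s :: "nat \<Rightarrow> int"
  assumes breakpoint_less: "i < n \<Longrightarrow> p i < p (Suc i)"
    and linear_on_piece: "i < n \<Longrightarrow> t \<in> {p i..p (Suc i)} \<Longrightarrow> g t = g (p i) + of_int (s i) * (t - p i)"

lemma pl_int_obtain_partition:
  assumes "pl_int g a b"
  obtains n p s where "p 0 = a" "p n = b" "pl_partition g n p s"
  using assms unfolding pl_int_def pl_partition_def by blast

context pl_partition
begin

lemma breakpoint_strict_mono: "i < j \<Longrightarrow> j \<le> n \<Longrightarrow> p i < p j"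
proof (induction j)
  case (Suc j)
  then have "p j < p (Suc j)" by (intro breakpoint_less) simp
  with Suc show ?case by (cases "i = j") auto
qed simp

lemma breakpoint_mono: "i \<le> j \<Longrightarrow> j \<le> n \<Longrightarrow> p i \<le> p j"
  using breakpoint_strict_mono[of i j] by (cases "i = j") auto

lemma breakpoint_inj: "i \<le> n \<Longrightarrow> j \<le> n \<Longrightarrow> p i = p j \<Longrightarrow> i = j"
  using breakpoint_strict_mono[of i j] breakpoint_strict_mono[of j i]
  by (cases i j rule: linorder_cases) auto

lemma piece_containing:
  assumes "p 0 \<le> t" "t < p n"
  obtains i where "i < n" "p i \<le> t" "t < p (Suc i)"
proof -
  define i where "i = Max {i. i \<le> n \<and> p i \<le> t}"
  have fin: "finite {i. i \<le> n \<and> p i \<le> t}" by simp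
  have "0 \<in> {i. i \<le> n \<and> p i \<le> t}" using assms(1) by simp
  then have i: "i \<le> n" "p i \<le> t"
    using Max_in[OF fin] unfolding i_def by blast+
  then have "i < n" using assms(2) by (cases "i = n") auto
  moreover have "t < p (Suc i)"
  proof (rule ccontr)
    assume "\<not> t < p (Suc i)"
    then have "Suc i \<in> {i. i \<le> n \<and> p i \<le> t}" using \<open>i < n\<close> by simp
    then show False using Max_ge[OF fin] unfolding i_def[symmetric] by fastforce
  qed
  ultimately show ?thesis using i that by blast
qed

lemma rslope_on_piece: "i < n \<Longrightarrow> p i \<le> t \<Longrightarrow> t < p (Suc i) \<Longrightarrow> rslope g t = s i"
  by (rule rslope_eq_if_linear_on[where a = "p i" and b = "p (Suc i)"]) (auto intro: linear_on_piece)

lemma lslope_on_piece: "i < n \<Longrightarrow> p i < t \<Longrightarrow> t \<le> p (Suc i) \<Longrightarrow> lslope g t = s i"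
  by (rule lslope_eq_if_linear_on[where a = "p i" and b = "p (Suc i)"]) (auto intro: linear_on_piece)

lemma jump_at_breakpoint:
  assumes "Suc i < n"
  shows "rslope g (p (Suc i)) - lslope g (p (Suc i)) = s (Suc i) - s i"
  using assms rslope_on_piece[of "Suc i" "p (Suc i)"] lslope_on_piece[of i "p (Suc i)"]
    breakpoint_less[of "Suc i"] breakpoint_less[of i] by simp

lemma jump_eq_sum_breakpoints:
  assumes "p 0 < t" "t < p n"
  shows "rslope g t - lslope g t
    = (\<Sum>i<n - 1. if p (Suc i) = t then of_int (s (Suc i) - s i) else 0)"
proof -
  have "p 0 \<le> t" using assms(1) by simp
  then obtain i where i: "i < n" "p i \<le> t" "t < p (Suc i)"
    using assms(2) by (rule piece_containing)
  show ?thesis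
  proof (cases "p i = t")
    case True
    then obtain j where j: "i = Suc j" using assms(1) by (cases i) auto
    have breakpoint_at_t: "p (Suc k) = t \<longleftrightarrow> k = j" if "k < n - 1" for k
    proof
      assume "p (Suc k) = t"
      then have "Suc k = i"
        using breakpoint_inj[of "Suc k" i] that i True by (simp add: less_diff_conv)
      then show "k = j" using j by simp
    qed (use True j in simp)
    have "(\<Sum>k<n - 1. if p (Suc k) = t then of_int (s (Suc k) - s k) else 0)
        = (\<Sum>k<n - 1. if k = j then of_int (s (Suc k) - s k) else (0::real))"
      by (rule sum.cong) (simp_all add: breakpoint_at_t)
    also have "\<dots> = of_int (s (Suc j) - s j)"
      using i j by (simp add: less_diff_conv)
    finally show ?thesis using jump_at_breakpoint[of j] i j True by simp
  next
    case False
    have "p (Suc k) \<noteq> t" if "k < n - 1" for k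
    proof (cases "Suc k \<le> i")
      case True
      then show ?thesis using breakpoint_mono[of "Suc k" i] i False by simp
    next
      case False
      then show ?thesis using breakpoint_mono[of "Suc i" "Suc k"] i that by (simp add: less_diff_conv)
    qed
    then have "(\<Sum>k<n - 1. if p (Suc k) = t then of_int (s (Suc k) - s k) else 0) = (0::real)"
      by (intro sum.neutral) simp
    moreover have "rslope g t = s i" "lslope g t = s i"
      using rslope_on_piece[OF i] lslope_on_piece[of i t] i False by simp_all
    ultimately show ?thesis by simp
  qed
qed

lemma increment_eq_sum_pieces:
  "j \<le> n \<Longrightarrow> g (p j) - g (p 0) = (\<Sum>i<j. of_int (s i) * (p (Suc i) - p i))"
proof (induction j)
  case (Suc j)
  then have "g (p (Suc j)) = g (p j) + of_int (s j) * (p (Suc j) - p j)"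
    using linear_on_piece[of j "p (Suc j)"] breakpoint_less[of j] by simp
  then show ?case using Suc by simp
qed simp

end

locale convex_pl_partition = pl_partition +
  assumes jump_nonneg: "p 0 < t \<Longrightarrow> t < p n \<Longrightarrow> 0 \<le> rslope g t - lslope g t"
begin

lemma slope_step:
  assumes "Suc i < n"
  shows "s i \<le> s (Suc i)"
proof -
  have "p 0 < p (Suc i)" "p (Suc i) < p n"
    using assms by (auto intro: breakpoint_strict_mono)
  then have "0 \<le> rslope g (p (Suc i)) - lslope g (p (Suc i))"
    by (rule jump_nonneg)
  then show ?thesis
    unfolding jump_at_breakpoint[OF assms] by simp
qed

lemma slope_mono: "i \<le> j \<Longrightarrow> j < n \<Longrightarrow> s i \<le> s j"
proof (induction j rule: dec_induct)
  case (step j)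
  then show ?case using slope_step[of j] by simp
qed simp

lemma increment_bounds:
  assumes "0 < n"
  shows "of_int (s 0) * (p n - p 0) \<le> g (p n) - g (p 0)"
    and "g (p n) - g (p 0) \<le> of_int (s (n - 1)) * (p n - p 0)"
proof -
  have width: "(\<Sum>i<n. p (Suc i) - p i) = p n - p 0"
    by (rule sum_lessThan_telescope)
  have increment: "g (p n) - g (p 0) = (\<Sum>i<n. of_int (s i) * (p (Suc i) - p i))"
    by (rule increment_eq_sum_pieces) simp
  have "of_int (s 0) * (p (Suc i) - p i) \<le> of_int (s i) * (p (Suc i) - p i)"
    and "of_int (s i) * (p (Suc i) - p i) \<le> of_int (s (n - 1)) * (p (Suc i) - p i)"
    if "i < n" for i
    using slope_mono[of 0 i] slope_mono[of i "n - 1"] breakpoint_less[of i] that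
    by (auto intro!: mult_right_mono)
  then show "of_int (s 0) * (p n - p 0) \<le> g (p n) - g (p 0)"
    and "g (p n) - g (p 0) \<le> of_int (s (n - 1)) * (p n - p 0)"
    unfolding increment width[symmetric] sum_distrib_left by (auto intro!: sum_mono)
qed

lemma jump_sum_bound:
  assumes "0 < n" "finite T" "T \<subseteq> {p 0<..<p n}"
  shows "(\<Sum>t\<in>T. rslope g t - lslope g t) \<le> of_int (s (n - 1) - s 0)"
proof -
  define d where "d i = (of_int (s (Suc i) - s i) :: real)" for i
  have "(\<Sum>t\<in>T. rslope g t - lslope g t) = (\<Sum>t\<in>T. \<Sum>i<n - 1. if p (Suc i) = t then d i else 0)"
    using jump_eq_sum_breakpoints assms(3) unfolding d_def by (intro sum.cong) auto
  also have "\<dots> = (\<Sum>i<n - 1. \<Sum>t\<in>T. if p (Suc i) = t then d i else 0)"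
    by (rule sum.swap)
  also have "\<dots> = (\<Sum>i<n - 1. if p (Suc i) \<in> T then d i else 0)"
    using assms(2) by (simp only: sum.delta')
  also have "\<dots> \<le> (\<Sum>i<n - 1. d i)"
    using slope_step unfolding d_def by (intro sum_mono) auto
  also have "\<dots> = of_int (s (n - 1) - s 0)"
    unfolding d_def of_int_diff by (rule sum_lessThan_telescope)
  finally show ?thesis .
qed

end

lemma convex_pl_int_slope_bounds:
  fixes g :: "real \<Rightarrow> real"
  assumes "pl_int g 0 M" "0 < M"
    and jump_nonneg: "\<And>t. 0 < t \<Longrightarrow> t < M \<Longrightarrow> 0 \<le> rslope g t - lslope g t"
  shows "rslope g 0 * M \<le> g M - g 0"
    and "g M - g 0 \<le> lslope g M * M"
    and "finite T \<Longrightarrow> T \<subseteq> {0<..<M} \<Longrightarrow> (\<Sum>t\<in>T. rslope g t - lslope g t) \<le> lslope g M - rslope g 0"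
proof -
  obtain n p s where ends: "p 0 = 0" "p n = M" and partition: "pl_partition g n p s"
    using assms(1) by (rule pl_int_obtain_partition)
  interpret convex_pl_partition g n p s
  proof (rule convex_pl_partition.intro[OF partition], unfold_locales)
    show "0 \<le> rslope g t - lslope g t" if "p 0 < t" "t < p n" for t
      using jump_nonneg that ends by simp
  qed
  have "0 < n" using ends \<open>0 < M\<close> by (cases n) auto
  then have slopes: "rslope g 0 = s 0" "lslope g M = s (n - 1)"
    using rslope_on_piece[of 0 0] lslope_on_piece[of "n - 1" M] breakpoint_less[of 0]
      breakpoint_less[of "n - 1"] ends by auto
  show "rslope g 0 * M \<le> g M - g 0" "g M - g 0 \<le> lslope g M * M"
    using increment_bounds \<open>0 < n\<close> slopes ends by (simp_all add: mult.commute)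
  show "(\<Sum>t\<in>T. rslope g t - lslope g t) \<le> lslope g M - rslope g 0"
    if "finite T" "T \<subseteq> {0<..<M}"
    using jump_sum_bound[of T] that \<open>0 < n\<close> slopes ends by simp
qed

text \<open>\<open>a e\<close> and \<open>b e\<close> play the outgoing slopes of \<open>f\<close> along \<open>e\<close> at its tail and at its head, and
  \<open>balance_nonneg\<close> is \<open>D + (f) \<ge> 0\<close> at the vertices, with \<open>w\<close> the vertex values of \<open>D\<close>.\<close>

locale vertex_slope_balance =
  fixes V :: "'v set" and E :: "'e set" and tail head :: "'e \<Rightarrow> 'v"
    and w :: "'v \<Rightarrow> real" and a b :: "'e \<Rightarrow> real"
  assumes finite_V: "finite V" and finite_E: "finite E"
    and tail_in_V: "e \<in> E \<Longrightarrow> tail e \<in> V" and head_in_V: "e \<in> E \<Longrightarrow> head e \<in> V"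
    and weight_nonneg: "v \<in> V \<Longrightarrow> 0 \<le> w v"
    and balance_nonneg:
      "v \<in> V \<Longrightarrow> 0 \<le> w v + (\<Sum>e\<in>{e\<in>E. tail e = v}. a e) + (\<Sum>e\<in>{e\<in>E. head e = v}. b e)"
begin

definition boundary_slope :: "'v set \<Rightarrow> 'e \<Rightarrow> real" where
  "boundary_slope S e = (if tail e \<in> S then a e else 0) + (if head e \<in> S then b e else 0)"

lemma sum_incident_slopes_eq:
  assumes "finite S"
  shows "(\<Sum>v\<in>S. (\<Sum>e\<in>{e\<in>E. tail e = v}. a e) + (\<Sum>e\<in>{e\<in>E. head e = v}. b e))
    = (\<Sum>e\<in>E. boundary_slope S e)"
proof -
  have "(\<Sum>v\<in>S. \<Sum>e\<in>{e\<in>E. h e = v}. c e) = (\<Sum>e\<in>E. if h e \<in> S then c e else 0)"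
    for h :: "'e \<Rightarrow> 'v" and c :: "'e \<Rightarrow> real"
  proof -
    have "(\<Sum>v\<in>S. \<Sum>e\<in>{e\<in>E. h e = v}. c e) = (\<Sum>v\<in>S. \<Sum>e\<in>E. if h e = v then c e else 0)"
      using finite_E by (simp add: sum.inter_filter)
    also have "\<dots> = (\<Sum>e\<in>E. \<Sum>v\<in>S. if h e = v then c e else 0)"
      by (rule sum.swap)
    also have "\<dots> = (\<Sum>e\<in>E. if h e \<in> S then c e else 0)"
      using assms by (simp add: sum.delta)
    finally show ?thesis .
  qed
  then show ?thesis
    unfolding boundary_slope_def by (simp add: sum.distrib)
qed

lemma boundary_slope_lower_bound:
  assumes "S \<subseteq> V" and nonpos: "\<And>e. e \<in> E \<Longrightarrow> boundary_slope S e \<le> 0" and "e0 \<in> E"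
  shows "- (\<Sum>v\<in>V. w v) \<le> boundary_slope S e0"
proof -
  have "finite S" using assms(1) finite_V by (rule finite_subset)
  have "0 \<le> (\<Sum>v\<in>S. w v + (\<Sum>e\<in>{e\<in>E. tail e = v}. a e) + (\<Sum>e\<in>{e\<in>E. head e = v}. b e))"
    using assms(1) by (intro sum_nonneg balance_nonneg) auto
  also have "\<dots> = (\<Sum>v\<in>S. w v) + (\<Sum>e\<in>E. boundary_slope S e)"
    using sum_incident_slopes_eq[OF \<open>finite S\<close>] by (simp add: sum.distrib add.assoc)
  also have "(\<Sum>v\<in>S. w v) \<le> (\<Sum>v\<in>V. w v)"
    using assms(1) finite_V weight_nonneg by (intro sum_mono2) auto
  also have "(\<Sum>e\<in>E. boundary_slope S e) = boundary_slope S e0 + (\<Sum>e\<in>E - {e0}. boundary_slope S e)"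
    using finite_E assms(3) by (simp add: sum.remove)
  also have "(\<Sum>e\<in>E - {e0}. boundary_slope S e) \<le> 0"
    using nonpos by (intro sum_nonpos) auto
  finally show ?thesis by simp
qed

text \<open>Cut along the upper level sets of \<open>\<phi>\<close>: by the hypotheses every edge contributes a
  nonpositive boundary slope, so no single one can drop below \<open>-\<Sum>w\<close>.\<close>

lemma slopes_bounded_by_weight:
  fixes \<phi> :: "'v \<Rightarrow> real"
  assumes convex: "\<And>e. e \<in> E \<Longrightarrow> a e + b e \<le> 0"
    and tail_descent: "\<And>e. e \<in> E \<Longrightarrow> \<phi> (head e) \<le> \<phi> (tail e) \<Longrightarrow> a e \<le> 0"
    and head_descent: "\<And>e. e \<in> E \<Longrightarrow> \<phi> (tail e) \<le> \<phi> (head e) \<Longrightarrow> b e \<le> 0"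
    and "e \<in> E"
  shows "\<bar>a e\<bar> \<le> (\<Sum>v\<in>V. w v)" and "\<bar>b e\<bar> \<le> (\<Sum>v\<in>V. w v)"
proof -
  define level where "level c = {v \<in> V. c \<le> \<phi> v}" for c
  have level_cut: "- (\<Sum>v\<in>V. w v) \<le> boundary_slope (level c) e" for c
  proof (rule boundary_slope_lower_bound)
    show "boundary_slope (level c) e' \<le> 0" if "e' \<in> E" for e'
      using convex[OF that] tail_descent[OF that] head_descent[OF that] tail_in_V[OF that] head_in_V[OF that]
      unfolding boundary_slope_def level_def by (auto split: if_splits)
  qed (use \<open>e \<in> E\<close> level_def in auto)
  have ends: "tail e \<in> V" "head e \<in> V" using \<open>e \<in> E\<close> tail_in_V head_in_V by auto
  have both: "- (\<Sum>v\<in>V. w v) \<le> a e + b e"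
    using level_cut[of "min (\<phi> (tail e)) (\<phi> (head e))"] ends
    unfolding boundary_slope_def level_def by simp
  have top: "- (\<Sum>v\<in>V. w v) \<le> boundary_slope (level (max (\<phi> (tail e)) (\<phi> (head e)))) e"
    by (rule level_cut)
  have "0 \<le> (\<Sum>v\<in>V. w v)" using weight_nonneg by (simp add: sum_nonneg)
  then show "\<bar>a e\<bar> \<le> (\<Sum>v\<in>V. w v)" "\<bar>b e\<bar> \<le> (\<Sum>v\<in>V. w v)"
    using both top ends convex[OF \<open>e \<in> E\<close>] tail_descent[OF \<open>e \<in> E\<close>] head_descent[OF \<open>e \<in> E\<close>]
    unfolding boundary_slope_def level_def by (auto simp: max_def split: if_splits)
qed

end

lemma metric_graphD:
  assumes "metric_graph G"
  shows "finite (verts G)" and "finite (edges G)"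
    and "e \<in> edges G \<Longrightarrow> src G e \<in> verts G" and "e \<in> edges G \<Longrightarrow> tgt G e \<in> verts G"
    and "e \<in> edges G \<Longrightarrow> 0 < len G e"
  using assms unfolding metric_graph_def by blast+

lemma prin_Ed:
  "e \<in> edges G \<Longrightarrow> 0 < t \<Longrightarrow> t < len G e \<Longrightarrow>
    prin G f (Ed e t) = rslope (edge_fun G f e) t - lslope (edge_fun G f e) t"
  unfolding prin_def ord_def points_def by auto

lemma prin_Vx:
  "v \<in> verts G \<Longrightarrow>
    prin G f (Vx v) = (\<Sum>e\<in>{e\<in>edges G. src G e = v}. rslope (edge_fun G f e) 0)
      + (\<Sum>e\<in>{e\<in>edges G. tgt G e = v}. - lslope (edge_fun G f e) (len G e))"
  unfolding prin_def ord_def points_def by auto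

lemma edge_fun_start: "edge_fun G f e 0 = f (Vx (src G e))"
  unfolding edge_fun_def by simp

lemma edge_fun_end: "0 < len G e \<Longrightarrow> edge_fun G f e (len G e) = f (Vx (tgt G e))"
  unfolding edge_fun_def by simp

definition divisor_degree :: "('v, 'e, 'z) mgraph_scheme \<Rightarrow> (('v, 'e) point \<Rightarrow> int) \<Rightarrow> int" where
  "divisor_degree G D = (\<Sum>v\<in>verts G. D (Vx v))"

lemma vertex_supported_effective_Ed: "vertex_supported_effective G D \<Longrightarrow> D (Ed e t) = 0"
  unfolding vertex_supported_effective_def by auto

lemma RD_nonneg: "f \<in> RD G D \<Longrightarrow> 0 \<le> real_of_int (D x) + prin G f x"
  unfolding RD_def by blast

lemma divisor_degree_nonneg: "vertex_supported_effective G D \<Longrightarrow> 0 \<le> divisor_degree G D"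
  unfolding vertex_supported_effective_def divisor_degree_def by (simp add: sum_nonneg)

context
  fixes G :: "('v, 'e, 'z) mgraph_scheme" and D :: "('v, 'e) point \<Rightarrow> int"
    and f :: "('v, 'e) point \<Rightarrow> real"
  assumes graph: "metric_graph G" and effective: "vertex_supported_effective G D"
    and f: "f \<in> RD G D"
begin

lemma RD_edge_convex:
  assumes "e \<in> edges G"
  shows "rslope (edge_fun G f e) 0 * len G e \<le> f (Vx (tgt G e)) - f (Vx (src G e))"
    and "f (Vx (tgt G e)) - f (Vx (src G e)) \<le> lslope (edge_fun G f e) (len G e) * len G e"
    and "finite T \<Longrightarrow> T \<subseteq> {0<..<len G e} \<Longrightarrow>
      (\<Sum>t\<in>T. rslope (edge_fun G f e) t - lslope (edge_fun G f e) t)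
        \<le> lslope (edge_fun G f e) (len G e) - rslope (edge_fun G f e) 0"
proof -
  have len: "0 < len G e" using metric_graphD(5)[OF graph assms] .
  have pl: "pl_int (edge_fun G f e) 0 (len G e)"
    using f assms unfolding RD_def rational_fun_def by blast
  have jumps: "0 \<le> rslope (edge_fun G f e) t - lslope (edge_fun G f e) t"
    if "0 < t" "t < len G e" for t
    using RD_nonneg[OF f, of "Ed e t"] prin_Ed[OF assms that] vertex_supported_effective_Ed[OF effective]
    by simp
  note bounds = convex_pl_int_slope_bounds[OF pl len jumps]
  show "rslope (edge_fun G f e) 0 * len G e \<le> f (Vx (tgt G e)) - f (Vx (src G e))"
    and "f (Vx (tgt G e)) - f (Vx (src G e)) \<le> lslope (edge_fun G f e) (len G e) * len G e"
    and "finite T \<Longrightarrow> T \<subseteq> {0<..<len G e} \<Longrightarrow>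
      (\<Sum>t\<in>T. rslope (edge_fun G f e) t - lslope (edge_fun G f e) t)
        \<le> lslope (edge_fun G f e) (len G e) - rslope (edge_fun G f e) 0"
    using bounds by (simp_all add: edge_fun_start edge_fun_end[OF len])
qed

lemma RD_boundary_slopes_bounded:
  assumes "e \<in> edges G"
  shows "\<bar>rslope (edge_fun G f e) 0\<bar> \<le> divisor_degree G D"
    and "\<bar>lslope (edge_fun G f e) (len G e)\<bar> \<le> divisor_degree G D"
proof -
  interpret vertex_slope_balance "verts G" "edges G" "src G" "tgt G" "\<lambda>v. real_of_int (D (Vx v))"
    "\<lambda>e. rslope (edge_fun G f e) 0" "\<lambda>e. - lslope (edge_fun G f e) (len G e)"
  proof
    show "0 \<le> real_of_int (D (Vx v))" for v
      using effective unfolding vertex_supported_effective_def by simp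
    show "0 \<le> real_of_int (D (Vx v)) + (\<Sum>e\<in>{e \<in> edges G. src G e = v}. rslope (edge_fun G f e) 0)
        + (\<Sum>e\<in>{e \<in> edges G. tgt G e = v}. - lslope (edge_fun G f e) (len G e))"
      if "v \<in> verts G" for v
      using RD_nonneg[OF f, of "Vx v"] prin_Vx[OF that, of f] by (simp add: add.assoc)
  qed (use metric_graphD[OF graph] in auto)
  have convex: "rslope (edge_fun G f e) 0 + - lslope (edge_fun G f e) (len G e) \<le> 0"
    if "e \<in> edges G" for e
    using RD_edge_convex(3)[OF that, of "{}"] by simp
  have tail_descent: "rslope (edge_fun G f e) 0 \<le> 0"
    if "e \<in> edges G" "f (Vx (tgt G e)) \<le> f (Vx (src G e))" for e
  proof -
    have "rslope (edge_fun G f e) 0 * len G e \<le> 0"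
      using RD_edge_convex(1)[OF that(1)] that(2) by linarith
    then show ?thesis
      using metric_graphD(5)[OF graph that(1)] by (simp add: mult_le_0_iff)
  qed
  have head_descent: "- lslope (edge_fun G f e) (len G e) \<le> 0"
    if "e \<in> edges G" "f (Vx (src G e)) \<le> f (Vx (tgt G e))" for e
  proof -
    have "0 \<le> lslope (edge_fun G f e) (len G e) * len G e"
      using RD_edge_convex(2)[OF that(1)] that(2) by linarith
    then show ?thesis
      using metric_graphD(5)[OF graph that(1)] by (simp add: zero_le_mult_iff)
  qed
  note slopes_bounded_by_weight[where \<phi> = "\<lambda>v. f (Vx v)", OF convex tail_descent head_descent assms]
  then show "\<bar>rslope (edge_fun G f e) 0\<bar> \<le> divisor_degree G D"
    and "\<bar>lslope (edge_fun G f e) (len G e)\<bar> \<le> divisor_degree G D"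
    by (simp_all add: divisor_degree_def)
qed

lemma RD_jump_sum_bound:
  assumes "e \<in> edges G" "finite T" "T \<subseteq> {0<..<len G e}"
  shows "(\<Sum>t\<in>T. rslope (edge_fun G f e) t - lslope (edge_fun G f e) t) \<le> 2 * divisor_degree G D"
proof -
  have "- divisor_degree G D \<le> rslope (edge_fun G f e) 0"
    and "lslope (edge_fun G f e) (len G e) \<le> divisor_degree G D"
    using RD_boundary_slopes_bounded[OF assms(1)] by (simp_all add: abs_le_iff)
  then show ?thesis using RD_edge_convex(3)[OF assms] by linarith
qed

end

lemma in_cellE:
  assumes "in_cell G D dv P m L"
  obtains f where "f \<in> RD G D" and "\<And>x. real_of_int (L x) = real_of_int (D x) + prin G f x"
  using assms unfolding in_cell_def linsys_def by blast

lemma in_cell_start_slope: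
  assumes "in_cell G D dv P m L" and "f \<in> RD G D"
    and "\<And>x. real_of_int (L x) = real_of_int (D x) + prin G f x" and "e \<in> edges G"
  shows "rslope (edge_fun G f e) 0 = m e"
  using assms unfolding in_cell_def by blast

lemma in_cell_edge_sum:
  assumes "in_cell G D dv P m L" and "e \<in> edges G"
  obtains T where "finite T" and "T \<subseteq> {0<..<len G e}"
    and "int (sum_list (P e)) = (\<Sum>t\<in>T. L (Ed e t))"
proof -
  obtain xs :: "real list" where length: "length xs = length (P e)" and "sorted_wrt (<) xs"
    and inside: "\<forall>x\<in>set xs. 0 < x \<and> x < len G e"
    and L: "\<forall>t. 0 < t \<and> t < len G e \<longrightarrow>
      L (Ed e t) = (\<Sum>i<length xs. if xs ! i = t then int (P e ! i) else 0)"
    using assms unfolding in_cell_def by blast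
  then have "distinct xs" by (simp add: strict_sorted_iff)
  have "L (Ed e (xs ! j)) = int (P e ! j)" if "j < length xs" for j
  proof -
    have "L (Ed e (xs ! j)) = (\<Sum>i<length xs. if xs ! i = xs ! j then int (P e ! i) else 0)"
      using L inside that by simp
    also have "\<dots> = (\<Sum>i<length xs. if i = j then int (P e ! i) else 0)"
      using \<open>distinct xs\<close> that by (intro sum.cong) (auto simp: nth_eq_iff_index_eq)
    finally show ?thesis using that by simp
  qed
  then have "map (\<lambda>t. L (Ed e t)) xs = map int (P e)"
    using length by (intro nth_equalityI) auto
  then have "int (sum_list (P e)) = (\<Sum>t\<in>set xs. L (Ed e t))"
    using \<open>distinct xs\<close> by (simp add: sum.distinct_set_conv_list flip: sum_list_of_nat)
  moreover have "set xs \<subseteq> {0<..<len G e}" using inside by auto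
  ultimately show ?thesis using that by blast
qed

lemma length_le_sum_list: "(\<And>x. x \<in> set xs \<Longrightarrow> 0 < x) \<Longrightarrow> length xs \<le> sum_list (xs :: nat list)"
proof (induction xs)
  case (Cons x xs)
  then have "0 < x" "length xs \<le> sum_list xs" by simp_all
  then show ?case by simp
qed simp

lemma sum_filter_le_card_mult:
  fixes h :: "'a \<Rightarrow> real"
  assumes "finite A" and "\<And>x. x \<in> A \<Longrightarrow> \<bar>h x\<bar> \<le> c"
  shows "(\<Sum>x\<in>{x\<in>A. Q x}. h x) \<le> real (card A) * c"
proof -
  have "(\<Sum>x\<in>{x\<in>A. Q x}. h x) \<le> (\<Sum>x\<in>{x\<in>A. Q x}. \<bar>h x\<bar>)"
    by (rule sum_mono) simp
  also have "\<dots> \<le> (\<Sum>x\<in>A. \<bar>h x\<bar>)"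
    using assms(1) by (intro sum_mono2) auto
  also have "\<dots> \<le> real (card A) * c"
    using assms by (intro sum_bounded_above) auto
  finally show ?thesis .
qed

context
  fixes G :: "('v, 'e, 'z) mgraph_scheme" and D :: "('v, 'e) point \<Rightarrow> int"
  assumes graph: "metric_graph G" and effective: "vertex_supported_effective G D"
begin

lemma in_cell_slope_bound:
  assumes "in_cell G D dv P m L" and "e \<in> edges G"
  shows "m e \<in> {- divisor_degree G D..divisor_degree G D}"
proof -
  obtain f where f: "f \<in> RD G D" and L: "\<And>x. real_of_int (L x) = real_of_int (D x) + prin G f x"
    using in_cellE[OF assms(1)] by blast
  have "\<bar>real_of_int (m e)\<bar> \<le> divisor_degree G D"
    using RD_boundary_slopes_bounded(1)[OF graph effective f assms(2)]
      in_cell_start_slope[OF assms(1) f L assms(2)] by simp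
  then show ?thesis by (simp add: abs_le_iff)
qed

lemma in_cell_vertex_bound:
  assumes "in_cell G D dv P m L" and "v \<in> verts G"
  shows "dv v \<le> (1 + 2 * card (edges G)) * nat (divisor_degree G D)"
proof -
  obtain f where f: "f \<in> RD G D" and L: "\<And>x. real_of_int (L x) = real_of_int (D x) + prin G f x"
    using in_cellE[OF assms(1)] by blast
  define d where "d = real_of_int (divisor_degree G D)"
  have "L (Vx v) = int (dv v)" using assms unfolding in_cell_def by blast
  then have "real (dv v) = real_of_int (D (Vx v))
      + (\<Sum>e\<in>{e\<in>edges G. src G e = v}. rslope (edge_fun G f e) 0)
      + (\<Sum>e\<in>{e\<in>edges G. tgt G e = v}. - lslope (edge_fun G f e) (len G e))"
    using L[of "Vx v"] prin_Vx[OF assms(2)] by simp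
  also have "D (Vx v) \<le> divisor_degree G D"
    unfolding divisor_degree_def using assms(2) metric_graphD(1)[OF graph] effective
    by (intro member_le_sum) (auto simp: vertex_supported_effective_def)
  then have "real_of_int (D (Vx v)) \<le> d"
    unfolding d_def by simp
  also have "(\<Sum>e\<in>{e\<in>edges G. src G e = v}. rslope (edge_fun G f e) 0) \<le> real (card (edges G)) * d"
    using metric_graphD(2)[OF graph] RD_boundary_slopes_bounded(1)[OF graph effective f]
    unfolding d_def by (intro sum_filter_le_card_mult)
  also have "(\<Sum>e\<in>{e\<in>edges G. tgt G e = v}. - lslope (edge_fun G f e) (len G e)) \<le> real (card (edges G)) * d"
    using metric_graphD(2)[OF graph] RD_boundary_slopes_bounded(2)[OF graph effective f]
    unfolding d_def by (intro sum_filter_le_card_mult) auto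
  also have "d + real (card (edges G)) * d + real (card (edges G)) * d
      = real ((1 + 2 * card (edges G)) * nat (divisor_degree G D))"
    unfolding d_def using divisor_degree_nonneg[OF effective] by (simp add: algebra_simps)
  finally show ?thesis by linarith
qed

lemma in_cell_partition_bound:
  assumes "in_cell G D dv P m L" and "e \<in> edges G"
  shows "set (P e) \<subseteq> {..2 * nat (divisor_degree G D)}"
    and "length (P e) \<le> 2 * nat (divisor_degree G D)"
proof -
  obtain f where f: "f \<in> RD G D" and L: "\<And>x. real_of_int (L x) = real_of_int (D x) + prin G f x"
    using in_cellE[OF assms(1)] by blast
  obtain T where T: "finite T" "T \<subseteq> {0<..<len G e}"
    and parts_sum: "int (sum_list (P e)) = (\<Sum>t\<in>T. L (Ed e t))"
    using assms by (rule in_cell_edge_sum)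
  have jump: "real_of_int (L (Ed e t)) = rslope (edge_fun G f e) t - lslope (edge_fun G f e) t"
    if "t \<in> T" for t
    using L[of "Ed e t"] prin_Ed[OF assms(2), of t f] vertex_supported_effective_Ed[OF effective]
      T(2) that by auto
  have "real (sum_list (P e)) = real_of_int (\<Sum>t\<in>T. L (Ed e t))"
    by (simp flip: parts_sum)
  also have "\<dots> = (\<Sum>t\<in>T. rslope (edge_fun G f e) t - lslope (edge_fun G f e) t)"
    unfolding of_int_sum by (rule sum.cong) (simp_all add: jump)
  also have "\<dots> \<le> 2 * divisor_degree G D"
    by (rule RD_jump_sum_bound[OF graph effective f assms(2) T])
  finally have bound: "sum_list (P e) \<le> 2 * nat (divisor_degree G D)"
    by linarith
  have "\<forall>i<length (P e). 0 < P e ! i"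
    using assms unfolding in_cell_def by blast
  then have "0 < x" if "x \<in> set (P e)" for x
    using that by (auto simp: in_set_conv_nth)
  then show "length (P e) \<le> 2 * nat (divisor_degree G D)"
    using length_le_sum_list bound order_trans by blast
  show "set (P e) \<subseteq> {..2 * nat (divisor_degree G D)}"
    using member_le_sum_list bound order_trans by fastforce
qed

end

lemma cell_restrict:
  "cell G D dv P m = cell G D (restrict dv (verts G)) (restrict P (edges G)) (restrict m (edges G))"
  unfolding cell_def in_cell_def by (simp cong: ball_cong if_cong)

theorem corollary2p7:
  fixes G :: "('v, 'e) mgraph" and D :: "('v, 'e) point \<Rightarrow> int"
  assumes "metric_graph G"
    and "vertex_supported_effective G D"
  shows "finite (cells G D)"
proof -
  define d where "d = divisor_degree G D"
  define data where "data = (verts G \<rightarrow>\<^sub>E {..(1 + 2 * card (edges G)) * nat d})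
    \<times> (edges G \<rightarrow>\<^sub>E {xs. set xs \<subseteq> {..2 * nat d} \<and> length xs \<le> 2 * nat d})
    \<times> (edges G \<rightarrow>\<^sub>E {-d..d})"
  have "finite data"
    unfolding data_def using metric_graphD(1,2)[OF assms(1)]
    by (intro finite_cartesian_product finite_PiE finite_lists_length_le) auto
  moreover have "cells G D \<subseteq> (\<lambda>(dv, P, m). cell G D dv P m) ` data"
  proof
    fix X assume "X \<in> cells G D"
    then obtain dv P m L where X: "X = cell G D dv P m" and L: "in_cell G D dv P m L"
      unfolding cells_def cell_def by blast
    have "(restrict dv (verts G), restrict P (edges G), restrict m (edges G)) \<in> data"
      using in_cell_vertex_bound[OF assms L] in_cell_partition_bound[OF assms L]
        in_cell_slope_bound[OF assms L]
      unfolding data_def d_def by auto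
    then show "X \<in> (\<lambda>(dv, P, m). cell G D dv P m) ` data"
      unfolding X cell_restrict[of G D dv] by force
  qed
  ultimately show ?thesis by (rule finite_surj)
qed

end
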